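(* Let $\kappa$ be a regular uncountable cardinal and $I$ an ideal on $\kappa$ with $NS_\kappa\subseteq I$. If $I$ is quasinormal, then $I$ is pleasant, and therefore $I$ is normal.
   Context: An ideal on $\kappa$ is a family of subsets of $\kappa$ closed under subsets and finite unions, which is $<\kappa$-complete and contains all singletons. $NS_\kappa$ is the ideal of nonstationary subsets of $\kappa$ (sets disjoint from some closed unbounded subset of $\kappa$). $I^*=\{\kappa\setminus X: X\in I\}$. For $A\subseteq\kappa$ and $X_\alpha\subseteq\kappa$, $\bigtriangledown_{\alpha\in A}X_\alpha=\{\xi<\kappa:\exists\alpha<\xi\,(\alpha\in A\wedge \xi\in X_\alpha)\}$. $I$ is normal if $X_\alpha\in I$ for all $\alpha<\kappa$ implies $\bigtriangledown_{\alpha<\kappa}X_\alpha\in I$. $I$ is pleasant if whenever $A\in I$ and $X_\alpha\in I$ for all $\alpha$, then $\bigtriangledown_{\alpha\in A}X_\alpha\in I$. $I$ is quasinormal if for every sequence $\langle X_\alpha\rangle_{\alpha<\kappa}$ of members of $I$ there is $Q\in I^*$ with $\bigtriangledown_{\alpha\in Q}X_\alpha\in I$. *)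

theory Defs
  imports Main
begin

text \<open>A cardinal kappa is represented as a cardinal well-order r (in the sense of
  BNF_Cardinal_Order_Relation); its field is the set of ordinals below kappa and
  (x,y) in r means x is at most y.\<close>

definition lt :: "'a rel \<Rightarrow> 'a \<Rightarrow> 'a \<Rightarrow> bool" where
  "lt r x y \<longleftrightarrow> (x, y) \<in> r \<and> x \<noteq> y"

definition ideal_on :: "'a rel \<Rightarrow> 'a set set \<Rightarrow> bool" where
  "ideal_on r I \<longleftrightarrow>
     I \<subseteq> Pow (Field r) \<and>
     (\<forall>X Y. X \<in> I \<and> Y \<subseteq> X \<longrightarrow> Y \<in> I) \<and>
     (\<forall>X Y. X \<in> I \<and> Y \<in> I \<longrightarrow> X \<union> Y \<in> I) \<and>
     (\<forall>F. F \<subseteq> I \<and> ordLess2 (card_of F) r \<longrightarrow> \<Union>F \<in> I) \<and>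
     (\<forall>\<alpha>\<in>Field r. {\<alpha>} \<in> I)"

definition unbounded :: "'a rel \<Rightarrow> 'a set \<Rightarrow> bool" where
  "unbounded r C \<longleftrightarrow> (\<forall>\<alpha>\<in>Field r. \<exists>\<beta>\<in>C. lt r \<alpha> \<beta>)"

definition closed_in :: "'a rel \<Rightarrow> 'a set \<Rightarrow> bool" where
  "closed_in r C \<longleftrightarrow>
     (\<forall>\<gamma>\<in>Field r. (\<exists>\<beta>\<in>C. lt r \<beta> \<gamma>) \<and>
        (\<forall>\<alpha>. lt r \<alpha> \<gamma> \<longrightarrow> (\<exists>\<beta>\<in>C. lt r \<alpha> \<beta> \<and> lt r \<beta> \<gamma>)) \<longrightarrow> \<gamma> \<in> C)"

definition club :: "'a rel \<Rightarrow> 'a set \<Rightarrow> bool" where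
  "club r C \<longleftrightarrow> C \<subseteq> Field r \<and> closed_in r C \<and> unbounded r C"

definition NS :: "'a rel \<Rightarrow> 'a set set" where
  "NS r = {X. X \<subseteq> Field r \<and> (\<exists>C. club r C \<and> X \<inter> C = {})}"

definition diag_union :: "'a rel \<Rightarrow> 'a set \<Rightarrow> ('a \<Rightarrow> 'a set) \<Rightarrow> 'a set" where
  "diag_union r A X = {\<xi> \<in> Field r. \<exists>\<alpha>. lt r \<alpha> \<xi> \<and> \<alpha> \<in> A \<and> \<xi> \<in> X \<alpha>}"

definition normal_ideal :: "'a rel \<Rightarrow> 'a set set \<Rightarrow> bool" where
  "normal_ideal r I \<longleftrightarrow>
     (\<forall>X. (\<forall>\<alpha>\<in>Field r. X \<alpha> \<in> I) \<longrightarrow> diag_union r (Field r) X \<in> I)"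

definition pleasant :: "'a rel \<Rightarrow> 'a set set \<Rightarrow> bool" where
  "pleasant r I \<longleftrightarrow>
     (\<forall>A X. A \<in> I \<and> (\<forall>\<alpha>\<in>Field r. X \<alpha> \<in> I) \<longrightarrow> diag_union r A X \<in> I)"

definition dual_filter :: "'a rel \<Rightarrow> 'a set set \<Rightarrow> 'a set set" where
  "dual_filter r I = {Field r - X | X. X \<in> I}"

definition quasinormal :: "'a rel \<Rightarrow> 'a set set \<Rightarrow> bool" where
  "quasinormal r I \<longleftrightarrow>
     (\<forall>X. (\<forall>\<alpha>\<in>Field r. X \<alpha> \<in> I) \<longrightarrow>
        (\<exists>Q\<in>dual_filter r I. diag_union r Q X \<in> I))"

end

theory Submission imports Defs begin

text \<open>Given sets X \<alpha> \<in> I, put Z \<beta> = \<Union>{X \<alpha> | \<alpha> < \<beta>}, which lies in I by \<kappa>-completeness,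
  and let Q \<in> I* be such that the diagonal union of Z over Q is in I, as quasinormality provides.
  If \<xi> lies in the diagonal union of X, witnessed by \<alpha> < \<xi>, and \<xi> is a limit point of Q,
  then some \<beta> \<in> Q lies strictly between \<alpha> and \<xi>, so \<xi> \<in> Z \<beta> and \<xi> lies in the diagonal
  union of Z over Q. As \<kappa> is regular and uncountable, the limit points of the unbounded set Q
  form a club (a bounded member of I* would force \<kappa> \<in> I), whose complement is in NS \<subseteq> I.
  Hence I is normal, and pleasant a fortiori, since diagonal unions are monotone in the index set.\<close>

unbundle cardinal_syntax

lemma lt_iff_underS: "lt r x y \<longleftrightarrow> x \<in> underS r y"
  unfolding lt_def underS_def by blast

lemma lt_trans: "trans r \<Longrightarrow> antisym r \<Longrightarrow> lt r x y \<Longrightarrow> lt r y z \<Longrightarrow> lt r x z"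
  unfolding lt_def by (metis antisymD transD)

lemma lt_le_trans: "trans r \<Longrightarrow> antisym r \<Longrightarrow> lt r x y \<Longrightarrow> (y, z) \<in> r \<Longrightarrow> lt r x z"
  unfolding lt_def by (metis antisymD transD)

lemma not_le_imp_lt:
  "wo_rel r \<Longrightarrow> x \<in> Field r \<Longrightarrow> y \<in> Field r \<Longrightarrow> (y, x) \<notin> r \<Longrightarrow> lt r x y"
  unfolding lt_def by (metis wo_rel.in_notinI)

lemma ideal_on_mono: "ideal_on r I \<Longrightarrow> X \<in> I \<Longrightarrow> Y \<subseteq> X \<Longrightarrow> Y \<in> I"
  unfolding ideal_on_def by metis

lemma ideal_on_Un: "ideal_on r I \<Longrightarrow> X \<in> I \<Longrightarrow> Y \<in> I \<Longrightarrow> X \<union> Y \<in> I"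
  unfolding ideal_on_def by metis

lemma ideal_on_singleton: "ideal_on r I \<Longrightarrow> \<alpha> \<in> Field r \<Longrightarrow> {\<alpha>} \<in> I"
  unfolding ideal_on_def by metis

lemma ideal_on_Union: "ideal_on r I \<Longrightarrow> F \<subseteq> I \<Longrightarrow> |F| <o r \<Longrightarrow> \<Union>F \<in> I"
  unfolding ideal_on_def by metis

lemma ideal_on_UN_underS:
  assumes "Card_order r" "ideal_on r I" "b \<in> Field r" "S \<subseteq> underS r b" "\<And>x. x \<in> S \<Longrightarrow> X x \<in> I"
  shows "\<Union>(X ` S) \<in> I"
proof (rule ideal_on_Union[OF assms(2)])
  show "X ` S \<subseteq> I" using assms(5) by blast
  have "|X ` S| \<le>o |S|" by (rule card_of_image)
  also have "|S| \<le>o |underS r b|" using assms(4) by (rule card_of_mono1)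
  also have "|underS r b| <o r" using assms(1,3) by (rule card_of_underS)
  finally show "|X ` S| <o r" .
qed

lemma ideal_on_underS:
  assumes "Card_order r" "ideal_on r I" "b \<in> Field r"
  shows "underS r b \<in> I"
proof -
  have "\<Union>((\<lambda>x. {x}) ` underS r b) \<in> I"
    using assms by (intro ideal_on_UN_underS) (auto intro: ideal_on_singleton underS_Field)
  then show ?thesis by simp
qed

text \<open>A bounded Q lies in I, and then so does Field r = Q \<union> (Field r - Q).\<close>
lemma dual_filter_unbounded:
  assumes "Card_order r" "ideal_on r I" "Field r \<notin> I" "Q \<in> dual_filter r I"
  shows "unbounded r Q"
proof (rule ccontr)
  assume "\<not> unbounded r Q"
  then obtain \<alpha> where \<alpha>: "\<alpha> \<in> Field r" "\<forall>\<beta>\<in>Q. \<not> lt r \<alpha> \<beta>"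
    unfolding unbounded_def by blast
  obtain Y where Y: "Y \<in> I" "Q = Field r - Y"
    using assms(4) unfolding dual_filter_def by blast
  have "Field r \<subseteq> Y \<union> (underS r \<alpha> \<union> {\<alpha>})"
  proof
    fix x assume x: "x \<in> Field r"
    show "x \<in> Y \<union> (underS r \<alpha> \<union> {\<alpha>})"
    proof (cases "x \<in> Y")
      case False
      then have "\<not> lt r \<alpha> x" using \<alpha>(2) Y(2) x by blast
      then have "(x, \<alpha>) \<in> r"
        using not_le_imp_lt[OF Card_order_wo_rel[OF assms(1)] \<alpha>(1) x] by blast
      then show ?thesis unfolding underS_def by blast
    qed simp
  qed
  moreover have "Y \<union> (underS r \<alpha> \<union> {\<alpha>}) \<in> I"
    using assms(1,2) \<alpha>(1) Y(1) by (intro ideal_on_Un ideal_on_underS ideal_on_singleton)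
  ultimately show False using assms(2,3) ideal_on_mono by metis
qed

definition limit_points :: "'a rel \<Rightarrow> 'a set \<Rightarrow> 'a set" where
  "limit_points r Q = {\<gamma> \<in> Field r. \<forall>\<alpha>. lt r \<alpha> \<gamma> \<longrightarrow> (\<exists>\<beta>\<in>Q. lt r \<alpha> \<beta> \<and> lt r \<beta> \<gamma>)}"

lemma closed_in_limit_points:
  assumes "trans r" "antisym r"
  shows "closed_in r (limit_points r Q)"
  unfolding closed_in_def limit_points_def using lt_trans[OF assms] by blast

lemma regularCard_bounded:
  assumes "Card_order r" "regularCard r" "K \<subseteq> Field r" "|K| <o r"
  shows "\<exists>a\<in>Field r. \<forall>k\<in>K. (k, a) \<in> r"
proof -
  have "\<not> cofinal K r"
    using assms not_ordLess_ordIso unfolding regularCard_def by blast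
  then obtain a where "a \<in> Field r" "\<forall>k\<in>K. \<not> lt r a k"
    unfolding cofinal_def lt_def by blast
  then show ?thesis
    using assms(3) not_le_imp_lt[OF Card_order_wo_rel[OF assms(1)]] by blast
qed

lemma regularCard_sequence_sup:
  fixes s :: "nat \<Rightarrow> 'a"
  assumes "Card_order r" "regularCard r" "natLeq <o r" "\<And>n. s n \<in> Field r"
  obtains g where "g \<in> Field r" "\<And>n. (s n, g) \<in> r" "\<And>\<alpha>. lt r \<alpha> g \<Longrightarrow> \<exists>n. lt r \<alpha> (s n)"
proof -
  have wo: "wo_rel r" using assms(1) by (rule Card_order_wo_rel)
  have "|range s| \<le>o |UNIV :: nat set|" by (rule card_of_image)
  also have "|UNIV :: nat set| =o natLeq" by (rule card_of_nat)
  also have "natLeq <o r" by (rule assms(3))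
  finally have "|range s| <o r" .
  moreover have "range s \<subseteq> Field r" using assms(4) by blast
  ultimately obtain a where "a \<in> Field r" "\<forall>k\<in>range s. (k, a) \<in> r"
    using regularCard_bounded[OF assms(1,2)] by metis
  then have ne: "a \<in> {u \<in> Field r. \<forall>n. (s n, u) \<in> r}" (is "_ \<in> ?U") by simp
  define g where "g = wo_rel.minim r ?U"
  have g: "g \<in> ?U" unfolding g_def using wo_rel.minim_in[OF wo, of ?U] ne by blast
  have g_least: "(g, u) \<in> r" if "u \<in> ?U" for u
    unfolding g_def using wo_rel.minim_least[OF wo _ that] by blast
  show ?thesis
  proof (rule that)
    show "g \<in> Field r" "(s n, g) \<in> r" for n using g by simp_all
    show "\<exists>n. lt r \<alpha> (s n)" if "lt r \<alpha> g" for \<alpha>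
    proof -
      have "\<alpha> \<notin> ?U"
      proof
        assume "\<alpha> \<in> ?U"
        then have "(g, \<alpha>) \<in> r" by (rule g_least)
        then show False using that antisymD[OF wo_rel.ANTISYM[OF wo]] unfolding lt_def by blast
      qed
      moreover have "\<alpha> \<in> Field r" using that unfolding lt_def by (blast intro: FieldI1)
      ultimately obtain n where "(s n, \<alpha>) \<notin> r" by blast
      then show ?thesis using not_le_imp_lt[OF wo \<open>\<alpha> \<in> Field r\<close> assms(4)] by blast
    qed
  qed
qed

text \<open>The limit of an \<omega>-sequence climbing through Q is a limit point of Q above its start.\<close>
lemma unbounded_limit_points:
  assumes cr: "Card_order r" and "regularCard r" "natLeq <o r" and Q: "unbounded r Q"
  shows "unbounded r (limit_points r Q)"
  unfolding unbounded_def
proof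
  fix \<alpha>\<^sub>0 assume "\<alpha>\<^sub>0 \<in> Field r"
  have wo: "wo_rel r" using cr by (rule Card_order_wo_rel)
  note lt_trans = lt_trans[OF wo_rel.TRANS[OF wo] wo_rel.ANTISYM[OF wo]]
    and lt_le_trans = lt_le_trans[OF wo_rel.TRANS[OF wo] wo_rel.ANTISYM[OF wo]]
  obtain next_in where next_in: "\<And>\<alpha>. \<alpha> \<in> Field r \<Longrightarrow> next_in \<alpha> \<in> Q \<and> lt r \<alpha> (next_in \<alpha>)"
    using Q unfolding unbounded_def by metis
  define s where "s n = (next_in ^^ n) \<alpha>\<^sub>0" for n
  have s_Field: "s n \<in> Field r" for n
    by (induction n) (use \<open>\<alpha>\<^sub>0 \<in> Field r\<close> next_in in \<open>auto simp: s_def lt_def intro: FieldI2\<close>)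
  have s_Q: "s (Suc n) \<in> Q" and s_lt: "lt r (s n) (s (Suc n))" for n
    using next_in[OF s_Field[of n]] by (simp_all add: s_def)
  obtain g where g: "g \<in> Field r" "\<And>n. (s n, g) \<in> r" "\<And>\<alpha>. lt r \<alpha> g \<Longrightarrow> \<exists>n. lt r \<alpha> (s n)"
    by (rule regularCard_sequence_sup[OF assms(1-3) s_Field]) (rule that)
  have s_below_g: "lt r (s n) g" for n
    using lt_le_trans[OF s_lt g(2)] .
  have "g \<in> limit_points r Q"
    unfolding limit_points_def
  proof (intro CollectI conjI allI impI)
    show "g \<in> Field r" by (rule g(1))
    fix \<alpha> assume "lt r \<alpha> g"
    then obtain n where "lt r \<alpha> (s n)" using g(3) by blast
    then have "lt r \<alpha> (s (Suc n))" using s_lt by (rule lt_trans)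
    then show "\<exists>\<beta>\<in>Q. lt r \<alpha> \<beta> \<and> lt r \<beta> g" using s_Q s_below_g by blast
  qed
  moreover have "lt r \<alpha>\<^sub>0 g" using s_below_g[of 0] by (simp add: s_def)
  ultimately show "\<exists>\<beta>\<in>limit_points r Q. lt r \<alpha>\<^sub>0 \<beta>" by blast
qed

lemma club_limit_points:
  assumes "Card_order r" "regularCard r" "natLeq <o r" "unbounded r Q"
  shows "club r (limit_points r Q)"
  unfolding club_def
proof (intro conjI)
  have wo: "wo_rel r" using assms(1) by (rule Card_order_wo_rel)
  show "limit_points r Q \<subseteq> Field r" unfolding limit_points_def by blast
  show "closed_in r (limit_points r Q)"
    using wo_rel.TRANS[OF wo] wo_rel.ANTISYM[OF wo] by (rule closed_in_limit_points)
  show "unbounded r (limit_points r Q)" using assms by (rule unbounded_limit_points)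
qed

lemma diag_union_Int_limit_points:
  "diag_union r A X \<inter> limit_points r Q \<subseteq> diag_union r Q (\<lambda>\<beta>. \<Union>(X ` underS r \<beta>))"
  unfolding diag_union_def limit_points_def lt_iff_underS by blast

lemma quasinormal_imp_normal:
  assumes cr: "Card_order r" and "regularCard r" "natLeq <o r"
    and I: "ideal_on r I" and "NS r \<subseteq> I" and "quasinormal r I"
  shows "normal_ideal r I"
  unfolding normal_ideal_def
proof (intro allI impI)
  fix X assume X: "\<forall>\<alpha>\<in>Field r. X \<alpha> \<in> I"
  show "diag_union r (Field r) X \<in> I"
  proof (cases "Field r \<in> I")
    case True
    have "diag_union r (Field r) X \<subseteq> Field r" unfolding diag_union_def by blast
    then show ?thesis by (rule ideal_on_mono[OF I True])
  next
    case False
    define Z where "Z \<beta> = \<Union>(X ` underS r \<beta>)" for \<beta>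
    have "Z \<beta> \<in> I" if "\<beta> \<in> Field r" for \<beta>
      unfolding Z_def using X by (intro ideal_on_UN_underS[OF cr I that]) (auto dest: underS_Field)
    then obtain Q where Q: "Q \<in> dual_filter r I" and QZ: "diag_union r Q Z \<in> I"
      using \<open>quasinormal r I\<close> unfolding quasinormal_def by blast
    have "club r (limit_points r Q)"
      using assms(1-3) dual_filter_unbounded[OF cr I False Q] by (rule club_limit_points)
    then have non_limit: "Field r - limit_points r Q \<in> I"
      using \<open>NS r \<subseteq> I\<close> unfolding NS_def by blast
    have "diag_union r (Field r) X \<subseteq> diag_union r Q Z \<union> (Field r - limit_points r Q)"
      using diag_union_Int_limit_points[of r "Field r" X Q] unfolding Z_def diag_union_def by blast
    then show ?thesis by (rule ideal_on_mono[OF I ideal_on_Un[OF I QZ non_limit]])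
  qed
qed

lemma normal_imp_pleasant:
  assumes I: "ideal_on r I" and "normal_ideal r I"
  shows "pleasant r I"
  unfolding pleasant_def
proof (intro allI impI)
  fix A X assume "A \<in> I \<and> (\<forall>\<alpha>\<in>Field r. X \<alpha> \<in> I)"
  then have "diag_union r (Field r) X \<in> I" using \<open>normal_ideal r I\<close> unfolding normal_ideal_def by blast
  moreover have "diag_union r A X \<subseteq> diag_union r (Field r) X"
    unfolding diag_union_def lt_def by (blast intro: FieldI1)
  ultimately show "diag_union r A X \<in> I" by (rule ideal_on_mono[OF I])
qed

theorem theorem3p5:
  fixes r :: "'a rel" and I :: "'a set set"
  assumes "Card_order r" and "regularCard r" and "ordLess2 natLeq r"
    and "ideal_on r I" and "NS r \<subseteq> I"
    and "quasinormal r I"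
  shows "pleasant r I \<and> normal_ideal r I"
proof
  show normal: "normal_ideal r I" using assms by (rule quasinormal_imp_normal)
  show "pleasant r I" using assms(4) normal by (rule normal_imp_pleasant)
qed

end
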